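(* Let $n = |\mathcal S||\mathcal A|$ and let $w=(w_1,\dots,w_n)$ be weights with $w_i>0$ for all $i$ and $\sum_{i=1}^n w_i = 1$. For any $p\in(1,\infty)$ and any $Q,Q'\in\mathbb{R}^{n}$, \[ \|F_\lambda Q - F_\lambda Q'\|_{p,w} \le \gamma_{p,w}\,\|Q-Q'\|_{p,w},\qquad \text{where } \gamma_{p,w} := \gamma\, n^{1/p}\left(\frac{w_{\max}}{w_{\min}}\right)^{1/p}. \]
   Context: Consider a finite discounted MDP with state space $\mathcal S=\{1,\dots,|\mathcal S|\}$, action space $\mathcal A=\{1,\dots,|\mathcal A|\}$, transition probabilities $P(s'\mid s,a)$, expected one-step reward $R(s,a)$, and discount factor $\gamma\in[0,1)$. Q-functions are identified with vectors in $\mathbb{R}^n$, $n=|\mathcal S||\mathcal A|$, indexed by pairs $(s,a)$. For a temperature $\lambda>0$, the soft Bellman operator is \[(F_\lambda Q)(s,a) := R(s,a)+\gamma\sum_{s'\in\mathcal S}P(s'\mid s,a)\,\lambda\ln\Big(\sum_{u\in\mathcal A}\exp\big(Q(s',u)/\lambda\big)\Big).\] For $x\in\mathbb{R}^n$, the weighted norm is $\|x\|_{p,w}=\big(\sum_{i=1}^n w_i|x_i|^p\big)^{1/p}$, and $w_{\min}=\min_i w_i$, $w_{\max}=\max_i w_i$. *)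

theory Defs
  imports "HOL-Analysis.Analysis"
begin

definition soft_bellman ::
  "real \<Rightarrow> real \<Rightarrow> ('s::finite \<Rightarrow> 'a::finite \<Rightarrow> 's \<Rightarrow> real) \<Rightarrow> ('s \<Rightarrow> 'a \<Rightarrow> real)
   \<Rightarrow> ('s \<times> 'a \<Rightarrow> real) \<Rightarrow> ('s \<times> 'a \<Rightarrow> real)" where
  "soft_bellman lam \<gamma> P R Q = (\<lambda>(s, a). R s a + \<gamma> * (\<Sum>s'\<in>UNIV. P s a s' *
      (lam * ln (\<Sum>u\<in>UNIV. exp (Q (s', u) / lam)))))"

definition wnorm :: "real \<Rightarrow> ('i::finite \<Rightarrow> real) \<Rightarrow> ('i \<Rightarrow> real) \<Rightarrow> real" where
  "wnorm p w x = (\<Sum>i\<in>UNIV. w i * \<bar>x i\<bar> powr p) powr (1 / p)"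

definition wmin :: "('i::finite \<Rightarrow> real) \<Rightarrow> real" where
  "wmin w = Min (range w)"

definition wmax :: "('i::finite \<Rightarrow> real) \<Rightarrow> real" where
  "wmax w = Max (range w)"

end

theory Submission
  imports Defs
begin

text \<open>The log-sum-exp map is nonexpansive for the sup norm, and averaging over the stochastic
  kernel P preserves this, so the soft Bellman operator is a \<gamma>-contraction for the sup norm.
  Since the weights sum to 1, the weighted p-norm is at most the sup norm. Conversely every
  component satisfies w_min |x_i|^p \<le> ||x||_{p,w}^p, and 1 \<le> n w_max,
  so the sup norm is at most (n w_max / w_min)^(1/p) times the weighted norm.\<close>

lemma lse_le_shift:
  fixes a b :: "'a::finite \<Rightarrow> real"
  assumes lam: "lam > 0" and le: "\<And>u. a u \<le> b u + M"
  shows "lam * ln (\<Sum>u\<in>UNIV. exp (a u / lam)) \<le> lam * ln (\<Sum>u\<in>UNIV. exp (b u / lam)) + M"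
proof -
  have pos_a: "0 < (\<Sum>u\<in>UNIV. exp (a u / lam))" and pos_b: "0 < (\<Sum>u\<in>UNIV. exp (b u / lam))"
    by (auto intro: sum_pos)
  have "(\<Sum>u\<in>UNIV. exp (a u / lam)) \<le> (\<Sum>u\<in>UNIV. exp (M / lam) * exp (b u / lam))"
  proof (rule sum_mono)
    fix u
    have "a u / lam \<le> M / lam + b u / lam"
      using le[of u] lam by (simp add: divide_right_mono add_divide_distrib[symmetric])
    then show "exp (a u / lam) \<le> exp (M / lam) * exp (b u / lam)"
      by (simp add: exp_add[symmetric])
  qed
  also have "\<dots> = exp (M / lam) * (\<Sum>u\<in>UNIV. exp (b u / lam))"
    by (simp add: sum_distrib_left)
  finally have "ln (\<Sum>u\<in>UNIV. exp (a u / lam)) \<le> ln (exp (M / lam) * (\<Sum>u\<in>UNIV. exp (b u / lam)))"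
    using pos_a by simp
  also have "\<dots> = M / lam + ln (\<Sum>u\<in>UNIV. exp (b u / lam))"
    using pos_b by (simp add: ln_mult)
  finally have "ln (\<Sum>u\<in>UNIV. exp (a u / lam)) \<le> M / lam + ln (\<Sum>u\<in>UNIV. exp (b u / lam))" .
  then show ?thesis
    using lam by (simp add: field_simps)
qed

lemma abs_lse_diff_le:
  fixes a b :: "'a::finite \<Rightarrow> real"
  assumes "lam > 0" and "\<And>u. \<bar>a u - b u\<bar> \<le> M"
  shows "\<bar>lam * ln (\<Sum>u\<in>UNIV. exp (a u / lam)) - lam * ln (\<Sum>u\<in>UNIV. exp (b u / lam))\<bar> \<le> M"
proof -
  have "a u \<le> b u + M" "b u \<le> a u + M" for u
    using assms(2)[of u] by (simp_all add: abs_le_iff)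
  then show ?thesis
    using lse_le_shift[OF assms(1), of a b M] lse_le_shift[OF assms(1), of b a M]
    by (simp add: abs_le_iff)
qed

lemma abs_soft_bellman_diff_le:
  fixes P :: "'s::finite \<Rightarrow> 'a::finite \<Rightarrow> 's \<Rightarrow> real" and Q Q' :: "'s \<times> 'a \<Rightarrow> real"
  assumes P_nonneg: "\<And>s a s'. P s a s' \<ge> 0"
    and P_sum: "\<And>s a. (\<Sum>s'\<in>UNIV. P s a s') = 1"
    and gamma: "0 \<le> \<gamma>" and lam: "lam > 0"
    and dist: "\<And>i. \<bar>Q i - Q' i\<bar> \<le> M"
  shows "\<bar>soft_bellman lam \<gamma> P R Q i - soft_bellman lam \<gamma> P R Q' i\<bar> \<le> \<gamma> * M"
proof (cases i)
  case (Pair s a)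
  define L where "L (Q :: 's \<times> 'a \<Rightarrow> real) s' = lam * ln (\<Sum>u\<in>UNIV. exp (Q (s', u) / lam))" for Q s'
  have L_diff: "\<bar>L Q s' - L Q' s'\<bar> \<le> M" for s'
    unfolding L_def by (rule abs_lse_diff_le[OF lam]) (rule dist)
  have "soft_bellman lam \<gamma> P R Q i - soft_bellman lam \<gamma> P R Q' i
      = \<gamma> * (\<Sum>s'\<in>UNIV. P s a s' * (L Q s' - L Q' s'))"
    unfolding soft_bellman_def Pair L_def by (simp add: algebra_simps sum_subtractf)
  moreover have "\<bar>\<Sum>s'\<in>UNIV. P s a s' * (L Q s' - L Q' s')\<bar> \<le> M"
  proof -
    have "\<bar>\<Sum>s'\<in>UNIV. P s a s' * (L Q s' - L Q' s')\<bar> \<le> (\<Sum>s'\<in>UNIV. P s a s' * M)"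
      by (rule order_trans[OF sum_abs sum_mono])
        (simp add: abs_mult P_nonneg L_diff mult_left_mono)
    also have "\<dots> = M"
      using P_sum by (simp add: sum_distrib_right[symmetric])
    finally show ?thesis .
  qed
  ultimately show ?thesis
    using gamma by (simp add: abs_mult mult_left_mono)
qed

lemma wmin_le: "wmin w \<le> w i"
  unfolding wmin_def by (rule Min_le) auto

lemma wmax_ge: "w i \<le> wmax w"
  unfolding wmax_def by (rule Max_ge) auto

lemma wmin_pos:
  assumes "\<And>i. w i > 0"
  shows "wmin w > 0"
  unfolding wmin_def using Min_in[of "range w"] assms by auto

lemma card_mult_wmax_ge_1:
  fixes w :: "'i::finite \<Rightarrow> real"
  assumes "(\<Sum>i\<in>UNIV. w i) = 1"
  shows "1 \<le> real CARD('i) * wmax w"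
proof -
  have "(\<Sum>i\<in>UNIV. w i) \<le> (\<Sum>i\<in>(UNIV::'i set). wmax w)"
    by (rule sum_mono) (rule wmax_ge)
  then show ?thesis
    using assms by simp
qed

lemma wnorm_le_const:
  assumes w_nonneg: "\<And>i. w i \<ge> 0" and w_sum: "(\<Sum>i\<in>UNIV. w i) = 1"
    and p: "p > 0" and c: "\<And>i. \<bar>x i\<bar> \<le> c"
  shows "wnorm p w x \<le> c"
proof -
  have c_nonneg: "0 \<le> c"
    using c[of undefined] by linarith
  have "(\<Sum>i\<in>UNIV. w i * \<bar>x i\<bar> powr p) \<le> (\<Sum>i\<in>UNIV. w i * c powr p)"
    by (intro sum_mono mult_left_mono powr_mono2) (use c p w_nonneg in auto)
  also have "\<dots> = c powr p"
    using w_sum by (simp add: sum_distrib_right[symmetric])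
  finally have "wnorm p w x \<le> (c powr p) powr (1 / p)"
    unfolding wnorm_def using p w_nonneg by (intro powr_mono2) (auto intro: sum_nonneg)
  also have "\<dots> = c"
    using p c_nonneg by (simp add: powr_powr)
  finally show ?thesis .
qed

lemma abs_le_wnorm:
  assumes w_pos: "\<And>i. w i > 0" and p: "p > 0"
  shows "\<bar>x j\<bar> \<le> (1 / wmin w) powr (1 / p) * wnorm p w x"
proof -
  have wmin: "wmin w > 0"
    by (rule wmin_pos) (rule w_pos)
  define S where "S = (\<Sum>i\<in>UNIV. w i * \<bar>x i\<bar> powr p)"
  have "wmin w * \<bar>x j\<bar> powr p \<le> w j * \<bar>x j\<bar> powr p"
    by (simp add: wmin_le mult_right_mono)
  also have "\<dots> \<le> S"
    unfolding S_def by (rule member_le_sum) (use w_pos in \<open>simp_all add: less_imp_le\<close>)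
  finally have "\<bar>x j\<bar> powr p \<le> S / wmin w"
    using wmin by (simp add: field_simps)
  then have "(\<bar>x j\<bar> powr p) powr (1 / p) \<le> (S / wmin w) powr (1 / p)"
    using p by (intro powr_mono2) auto
  moreover have "S \<ge> 0"
    unfolding S_def using w_pos by (simp add: sum_nonneg less_imp_le)
  ultimately show ?thesis
    using p wmin unfolding wnorm_def S_def[symmetric]
    by (simp add: powr_powr powr_divide)
qed

lemma abs_le_card_wmax_wmin_wnorm:
  fixes w x :: "'i::finite \<Rightarrow> real"
  assumes w_pos: "\<And>i. w i > 0" and w_sum: "(\<Sum>i\<in>UNIV. w i) = 1" and p: "p > 0"
  shows "\<bar>x j\<bar> \<le> real CARD('i) powr (1 / p) * (wmax w / wmin w) powr (1 / p) * wnorm p w x"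
proof -
  have wmin: "wmin w > 0"
    by (rule wmin_pos) (rule w_pos)
  have "1 / wmin w \<le> real CARD('i) * wmax w / wmin w"
    using card_mult_wmax_ge_1[OF w_sum] wmin by (simp add: divide_right_mono)
  then have "(1 / wmin w) powr (1 / p) \<le> (real CARD('i) * (wmax w / wmin w)) powr (1 / p)"
    using p wmin by (intro powr_mono2) auto
  also have "\<dots> = real CARD('i) powr (1 / p) * (wmax w / wmin w) powr (1 / p)"
    by (rule powr_mult)
  finally have "(1 / wmin w) powr (1 / p) * wnorm p w x
      \<le> real CARD('i) powr (1 / p) * (wmax w / wmin w) powr (1 / p) * wnorm p w x"
    by (rule mult_right_mono) (simp add: wnorm_def)
  with abs_le_wnorm[OF w_pos p] show ?thesis
    by (rule order_trans)
qed

theorem proposition1: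
  fixes P :: "'s::finite \<Rightarrow> 'a::finite \<Rightarrow> 's \<Rightarrow> real"
    and R :: "'s \<Rightarrow> 'a \<Rightarrow> real"
    and \<gamma> lam p :: real
    and w Q Q' :: "'s \<times> 'a \<Rightarrow> real"
  assumes P_nonneg: "\<And>s a s'. P s a s' \<ge> 0"
    and P_sum: "\<And>s a. (\<Sum>s'\<in>UNIV. P s a s') = 1"
    and gamma: "0 \<le> \<gamma>" "\<gamma> < 1"
    and lam: "lam > 0"
    and w_pos: "\<And>i. w i > 0"
    and w_sum: "(\<Sum>i\<in>UNIV. w i) = 1"
    and p: "1 < p"
  shows "wnorm p w (\<lambda>i. soft_bellman lam \<gamma> P R Q i - soft_bellman lam \<gamma> P R Q' i)
         \<le> \<gamma> * real CARD('s \<times> 'a) powr (1 / p) * (wmax w / wmin w) powr (1 / p)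
           * wnorm p w (\<lambda>i. Q i - Q' i)"
proof -
  define c where "c = real CARD('s \<times> 'a) powr (1 / p) * (wmax w / wmin w) powr (1 / p)
    * wnorm p w (\<lambda>i. Q i - Q' i)"
  have "\<bar>Q i - Q' i\<bar> \<le> c" for i
    unfolding c_def using abs_le_card_wmax_wmin_wnorm[OF w_pos w_sum, of p "\<lambda>i. Q i - Q' i"] p
    by simp
  then have "\<bar>soft_bellman lam \<gamma> P R Q i - soft_bellman lam \<gamma> P R Q' i\<bar> \<le> \<gamma> * c" for i
    by (rule abs_soft_bellman_diff_le[OF P_nonneg P_sum gamma(1) lam])
  then have "wnorm p w (\<lambda>i. soft_bellman lam \<gamma> P R Q i - soft_bellman lam \<gamma> P R Q' i) \<le> \<gamma> * c"
    using w_pos w_sum p by (intro wnorm_le_const) (auto intro: less_imp_le)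
  then show ?thesis
    unfolding c_def by (simp add: mult.assoc)
qed

end
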